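(* Let $p=f+\varepsilon g\in\mathbb{D}[t]$ ($f,g\in\mathbb{R}[t]$) be monic, and write $f=\prod_{i=1}^m N_i^{n_i}$ where $N_1,\dots,N_m\in\mathbb{R}[t]$ are pairwise coprime irreducible monic polynomials and $n_1,\dots,n_m$ are positive integers. Then $p$ can be written as a product of monic polynomials in $\mathbb{D}[t]$ each of whose primal parts is irreducible over $\mathbb{R}$ if and only if $\prod_{i=1}^m N_i^{n_i-1}$ divides $g$ in $\mathbb{R}[t]$.
   Context: $\mathbb{D}=\mathbb{R}[\varepsilon]/\langle\varepsilon^2\rangle$ denotes the dual numbers; every element of $\mathbb{D}[t]$ is uniquely $f+\varepsilon g$ with $f,g\in\mathbb{R}[t]$, where $f$ is called the primal part. A polynomial in $\mathbb{D}[t]$ is monic if its leading coefficient is $1$ (so $p=f+\varepsilon g$ monic means $f$ monic and $\deg g<\deg f$). *)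

theory Defs
  imports "HOL-Computational_Algebra.Polynomial_Factorial"
begin

text \<open>Dual-number polynomials D[t], D = R[eps]/(eps^2), represented as pairs (f, g)
  standing for f + eps g, with f, g real polynomials (f is the primal part).\<close>

type_synonym dpoly = "real poly \<times> real poly"

definition dmult :: "dpoly \<Rightarrow> dpoly \<Rightarrow> dpoly" where
  "dmult p q = (fst p * fst q, fst p * snd q + snd p * fst q)"

definition dpoly_one :: dpoly where
  "dpoly_one = (1, 0)"

fun dprod :: "dpoly list \<Rightarrow> dpoly" where
  "dprod [] = dpoly_one"
| "dprod (q # qs) = dmult q (dprod qs)"

definition dmonic :: "dpoly \<Rightarrow> bool" where
  "dmonic p = (let d = max (degree (fst p)) (degree (snd p))
               in coeff (fst p) d = 1 \<and> coeff (snd p) d = 0)"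

end

theory Submission
  imports Defs "HOL-Computational_Algebra.Field_as_Ring"
begin

text \<open>The dual part of a product of factors \<open>a\<^sub>k + \<epsilon> b\<^sub>k\<close> is \<open>\<Sigma>\<^sub>k b\<^sub>k \<Pi>\<^sub>j\<^sub>\<noteq>\<^sub>k a\<^sub>j\<close>.
  If every \<open>a\<^sub>k\<close> is irreducible, it divides the radical \<open>rad = \<Pi> N\<^sub>i\<close> of \<open>f = \<Pi> a\<^sub>k\<close>, so
  \<open>g \<cdot> rad\<close> is divisible by \<open>f = R \<cdot> rad\<close>, where \<open>R = \<Pi> N\<^sub>i^(n\<^sub>i - 1)\<close>; hence \<open>R\<close> divides \<open>g\<close>.
  Conversely, if \<open>g = R h\<close>, monicity forces \<open>deg h < deg rad\<close>, so by partial fractions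
  \<open>h = \<Sigma> r\<^sub>i \<Pi>\<^sub>j\<^sub>\<noteq>\<^sub>i N\<^sub>j\<close> with \<open>deg r\<^sub>i < deg N\<^sub>i\<close>, and \<open>f + \<epsilon> g\<close> is the product of the
  blocks \<open>(N\<^sub>i + \<epsilon> r\<^sub>i) N\<^sub>i^(n\<^sub>i - 1)\<close>.\<close>

definition irreducibly_factorable :: "dpoly \<Rightarrow> bool" where
  "irreducibly_factorable p \<longleftrightarrow>
     (\<exists>qs. (\<forall>q\<in>set qs. dmonic q \<and> irreducible (fst q)) \<and> dprod qs = p)"

lemma dmonic_iff: "dmonic (a, c) \<longleftrightarrow> lead_coeff a = 1 \<and> (c = 0 \<or> degree c < degree a)"
proof
  assume monic: "dmonic (a, c)"
  have small: "c = 0 \<or> degree c < degree a"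
  proof (rule ccontr)
    assume "\<not> ?thesis"
    then have "max (degree a) (degree c) = degree c" "lead_coeff c \<noteq> 0" by auto
    with monic show False by (simp add: dmonic_def Let_def)
  qed
  then have "max (degree a) (degree c) = degree a" by auto
  with monic small show "lead_coeff a = 1 \<and> (c = 0 \<or> degree c < degree a)"
    by (simp add: dmonic_def Let_def)
next
  assume "lead_coeff a = 1 \<and> (c = 0 \<or> degree c < degree a)"
  then show "dmonic (a, c)" by (auto simp: dmonic_def Let_def coeff_eq_0)
qed

lemma dprod_append: "dprod (xs @ ys) = dmult (dprod xs) (dprod ys)"
  by (induction xs) (auto simp: dmult_def dpoly_one_def algebra_simps)

lemma dprod_replicate_primal: "dprod (replicate k (a, 0)) = (a ^ k, 0)"
  by (induction k) (auto simp: dmult_def dpoly_one_def)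

lemma fst_dprod: "fst (dprod qs) = prod_list (map fst qs)"
  by (induction qs) (auto simp: dmult_def dpoly_one_def)

lemma dprod_dual_mult_dvd:
  assumes "\<forall>q\<in>set qs. fst q dvd D"
  shows "fst (dprod qs) dvd snd (dprod qs) * D"
  using assms
proof (induction qs)
  case Nil
  then show ?case by (simp add: dpoly_one_def)
next
  case (Cons q qs)
  obtain a b where q: "q = (a, b)" by force
  obtain F G where p: "dprod qs = (F, G)" by force
  from Cons q p have "F dvd G * D" "a dvd D" by auto
  then have "a * F dvd a * (G * D)" "a * F dvd b * (F * D)"
    by (auto intro: mult_dvd_mono simp: mult.commute)
  then have "a * F dvd (a * G + b * F) * D"
    by (simp add: distrib_right mult.assoc)
  with q p show ?case by (simp add: dmult_def)
qed

lemma irreducibly_factorable_one: "irreducibly_factorable dpoly_one"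
  unfolding irreducibly_factorable_def by (intro exI[of _ "[]"]) simp

lemma irreducibly_factorable_dmult:
  assumes "irreducibly_factorable p" "irreducibly_factorable q"
  shows "irreducibly_factorable (dmult p q)"
proof -
  from assms obtain ps qs
    where "\<forall>x\<in>set ps. dmonic x \<and> irreducible (fst x)" "dprod ps = p"
      and "\<forall>x\<in>set qs. dmonic x \<and> irreducible (fst x)" "dprod qs = q"
    unfolding irreducibly_factorable_def by blast
  then show ?thesis
    unfolding irreducibly_factorable_def by (intro exI[of _ "ps @ qs"]) (auto simp: dprod_append)
qed

lemma irreducibly_factorable_power:
  assumes "irreducible N" "lead_coeff N = 1" "degree r < degree N" "0 < n"
  shows "irreducibly_factorable (N ^ n, r * N ^ (n - 1))"
proof -
  have "dprod ((N, r) # replicate (n - 1) (N, 0)) = (N ^ n, r * N ^ (n - 1))"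
    using \<open>0 < n\<close> by (simp add: dprod_replicate_primal dmult_def power_eq_if)
  moreover have "dmonic (N, r)" "dmonic (N, 0)"
    using assms by (auto simp: dmonic_iff)
  ultimately show ?thesis
    unfolding irreducibly_factorable_def using \<open>irreducible N\<close>
    by (intro exI[of _ "(N, r) # replicate (n - 1) (N, 0)"]) auto
qed

lemma irreducibly_factorable_dvd_dual_mult:
  assumes "irreducibly_factorable (f, g)" "\<And>p. prime_elem p \<Longrightarrow> p dvd f \<Longrightarrow> p dvd D"
  shows "f dvd g * D"
proof -
  from assms(1) obtain qs
    where qs: "\<forall>q\<in>set qs. dmonic q \<and> irreducible (fst q)" "dprod qs = (f, g)"
    unfolding irreducibly_factorable_def by blast
  have "fst q dvd D" if "q \<in> set qs" for q
  proof (rule assms(2))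
    show "prime_elem (fst q)" using qs(1) that by (simp add: prime_elem_iff_irreducible)
    have "fst q dvd prod_list (map fst qs)" using that by (intro prod_list_dvd) simp
    then show "fst q dvd f" using qs(2) fst_dprod[of qs] by simp
  qed
  then show ?thesis using dprod_dual_mult_dvd[of qs D] qs(2) by simp
qed

lemma prime_elem_dvd_prod_powers_imp_dvd_prod:
  fixes f :: "'b \<Rightarrow> 'a :: comm_semiring_1"
  assumes "finite I" "prime_elem p" "p dvd (\<Prod>i\<in>I. f i ^ n i)"
  shows "p dvd (\<Prod>i\<in>I. f i)"
  using assms
proof (induction I rule: finite_induct)
  case empty
  then show ?case by simp
next
  case (insert x I)
  then show ?case by (auto simp: prime_elem_dvd_mult_iff dest: prime_elem_dvd_power)
qed

lemma prod_power_pred_mult: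
  fixes f :: "'b \<Rightarrow> 'a :: comm_monoid_mult"
  assumes "\<And>i. i \<in> I \<Longrightarrow> 0 < n i"
  shows "(\<Prod>i\<in>I. f i ^ (n i - 1)) * (\<Prod>i\<in>I. f i) = (\<Prod>i\<in>I. f i ^ n i)"
  unfolding prod.distrib[symmetric] using assms
  by (intro prod.cong) (simp_all add: power_minus_mult del: One_nat_def)

lemma poly_partial_fractions:
  fixes A B h :: "'a :: field_gcd poly"
  assumes "coprime A B" "0 < degree A" "B \<noteq> 0" "degree h < degree A + degree B"
  obtains u v where "h = u * B + v * A" "degree u < degree A" "v = 0 \<or> degree v < degree B"
proof -
  have "A \<noteq> 0" using \<open>0 < degree A\<close> by auto
  obtain s t where st: "s * A + t * B = 1"
    using bezout_coefficients_fst_snd[of A B] coprime_imp_gcd_eq_1[OF \<open>coprime A B\<close>] by metis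
  define u where "u = (h * t) mod A"
  have u: "degree u < degree A"
    using degree_mod_less[OF \<open>A \<noteq> 0\<close>, of "h * t"] \<open>0 < degree A\<close> by (auto simp: u_def)
  have "h - u * B = A * (h * s + (h * t div A) * B)"
  proof -
    have "h - u * B = h * (s * A + t * B) - (h * t - (h * t div A) * A) * B"
      using st by (simp add: u_def minus_div_mult_eq_mod)
    then show ?thesis by (simp add: algebra_simps)
  qed
  then obtain v where v: "h - u * B = v * A" by (metis mult.commute)
  have "degree (h - u * B) < degree A + degree B"
  proof -
    have "degree (u * B) \<le> degree u + degree B" by (rule degree_mult_le)
    then have "degree (h - u * B) \<le> degree A + degree B - 1"
      using u assms(4) by (intro degree_diff_le) auto
    then show ?thesis using \<open>0 < degree A\<close> by linarith
  qed
  then have "v = 0 \<or> degree v < degree B"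
    using v \<open>A \<noteq> 0\<close> by (cases "v = 0") (auto simp: degree_mult_eq)
  moreover have "h = u * B + v * A" using v by (simp add: algebra_simps)
  ultimately show ?thesis using that u by blast
qed

lemma irreducibly_factorable_prod_powers:
  assumes "finite I"
    and "\<And>i. i \<in> I \<Longrightarrow> irreducible (N i)"
    and "\<And>i. i \<in> I \<Longrightarrow> lead_coeff (N i) = 1"
    and "\<And>i. i \<in> I \<Longrightarrow> 0 < n i"
    and "\<And>i j. i \<in> I \<Longrightarrow> j \<in> I \<Longrightarrow> i \<noteq> j \<Longrightarrow> coprime (N i) (N j)"
    and "h = 0 \<or> degree h < degree (\<Prod>i\<in>I. N i)"
  shows "irreducibly_factorable ((\<Prod>i\<in>I. N i ^ n i), (\<Prod>i\<in>I. N i ^ (n i - 1)) * h)"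
  using assms
proof (induction I arbitrary: h rule: finite_induct)
  case empty
  then show ?case using irreducibly_factorable_one by (simp add: dpoly_one_def)
next
  case (insert k I)
  let ?F = "\<Prod>i\<in>I. N i ^ n i" and ?R = "\<Prod>i\<in>I. N i ^ (n i - 1)" and ?rad = "\<Prod>i\<in>I. N i"
  have Nk: "irreducible (N k)" "lead_coeff (N k) = 1" "0 < n k"
    using insert.prems by auto
  then have "0 < degree (N k)"
    by (metis irreducible_not_unit is_unit_iff_degree irreducible_def gr0I)
  then have "N k \<noteq> 0" by auto
  have "?rad \<noteq> 0" using insert.hyps(1) insert.prems(1) by (auto simp: irreducible_def)
  have "coprime (N k) ?rad"
    using insert.hyps(2) by (intro prod_coprime_right insert.prems(4)) auto
  moreover have "degree h < degree (N k) + degree ?rad"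
  proof -
    have "degree (\<Prod>i\<in>insert k I. N i) = degree (N k) + degree ?rad"
      using insert.hyps by (simp add: degree_mult_eq[OF \<open>N k \<noteq> 0\<close> \<open>?rad \<noteq> 0\<close>])
    then show ?thesis using insert.prems(5) \<open>0 < degree (N k)\<close> by auto
  qed
  ultimately obtain u v where uv: "h = u * ?rad + v * N k"
    and u: "degree u < degree (N k)" and v: "v = 0 \<or> degree v < degree ?rad"
    using poly_partial_fractions \<open>0 < degree (N k)\<close> \<open>?rad \<noteq> 0\<close> by metis
  have "irreducibly_factorable (dmult (N k ^ n k, u * N k ^ (n k - 1)) (?F, ?R * v))"
    using insert Nk u v by (intro irreducibly_factorable_dmult irreducibly_factorable_power) auto
  moreover have "dmult (N k ^ n k, u * N k ^ (n k - 1)) (?F, ?R * v)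
      = (N k ^ n k * ?F, (N k ^ (n k - 1) * ?R) * h)"
  proof -
    have "?F = ?R * ?rad"
      using insert.prems(3) by (intro prod_power_pred_mult[symmetric]) auto
    moreover have "N k ^ n k = N k ^ (n k - 1) * N k"
      using \<open>0 < n k\<close> by (simp add: power_minus_mult del: One_nat_def)
    ultimately show ?thesis
      unfolding dmult_def uv by (simp add: algebra_simps)
  qed
  ultimately show ?case
    using insert.hyps by simp
qed

theorem lemma4:
  fixes f g :: "real poly" and N :: "nat \<Rightarrow> real poly" and n :: "nat \<Rightarrow> nat" and m :: nat
  assumes "dmonic (f, g)"
    and "\<And>i. i \<in> {1..m} \<Longrightarrow> irreducible (N i)"
    and "\<And>i. i \<in> {1..m} \<Longrightarrow> lead_coeff (N i) = 1"
    and "\<And>i. i \<in> {1..m} \<Longrightarrow> n i > 0"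
    and "\<And>i j. i \<in> {1..m} \<Longrightarrow> j \<in> {1..m} \<Longrightarrow> i \<noteq> j \<Longrightarrow> coprime (N i) (N j)"
    and "f = (\<Prod>i=1..m. N i ^ n i)"
  shows "(\<exists>qs. (\<forall>q\<in>set qs. dmonic q \<and> irreducible (fst q)) \<and> dprod qs = (f, g))
         \<longleftrightarrow> (\<Prod>i=1..m. N i ^ (n i - 1)) dvd g"
proof -
  define R where "R = (\<Prod>i=1..m. N i ^ (n i - 1))"
  define rad where "rad = (\<Prod>i=1..m. N i)"
  have "rad \<noteq> 0" using assms(2) by (auto simp: rad_def irreducible_def)
  have f: "f = R * rad"
    unfolding assms(6) R_def rad_def using assms(4) by (rule prod_power_pred_mult[symmetric])
  have "irreducibly_factorable (f, g) \<longleftrightarrow> R dvd g"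
  proof
    assume factorable: "irreducibly_factorable (f, g)"
    have "f dvd g * rad"
    proof (rule irreducibly_factorable_dvd_dual_mult[OF factorable])
      fix p assume "prime_elem p" "p dvd f"
      then show "p dvd rad"
        unfolding assms(6) rad_def
        by (rule prime_elem_dvd_prod_powers_imp_dvd_prod[OF finite_atLeastAtMost])
    qed
    then show "R dvd g" using f \<open>rad \<noteq> 0\<close> by simp
  next
    assume "R dvd g"
    then obtain h where g: "g = R * h" by blast
    have "R \<noteq> 0" using f \<open>rad \<noteq> 0\<close> assms(1) by (auto simp: dmonic_iff)
    then have "h = 0 \<or> degree h < degree rad"
      using assms(1) \<open>rad \<noteq> 0\<close> by (cases "h = 0") (auto simp: dmonic_iff f g degree_mult_eq)
    then have "irreducibly_factorable ((\<Prod>i=1..m. N i ^ n i), R * h)"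
      unfolding R_def rad_def by (intro irreducibly_factorable_prod_powers) (use assms(2-5) in auto)
    then show "irreducibly_factorable (f, g)" using assms(6) g by simp
  qed
  then show ?thesis unfolding irreducibly_factorable_def R_def .
qed

end
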